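(* Let $X$ be a finite set with $|X|\ge2$, let $X_r$ be a disjoint copy of $X$, and regard $\bar{\mathcal{B}}(X)=\bar{\mathcal{B}}(X,X_r)$. A collection $\mathcal{S}$ of directed partial splits of $X$ is compatible if and only if $\{T_S:S\in\mathcal{S}\}$ is a compatible system of splits of $\bar{\mathcal{B}}(X)$.
   Context: A directed partial split of $X$ is an ordered pair $(A,B)$ of non-empty disjoint subsets of $X$. Two directed partial splits $(A,B),(C,D)$ are compatible if one of: $A\subseteq C$ and $B\supseteq D$; $A\subseteq X\setminus C$ and $B\supseteq X\setminus D$; $A\supseteq C$ and $B\subseteq D$; $A\supseteq X\setminus C$ and $B\subseteq X\setminus D$. A set of directed partial splits is compatible if its elements are pairwise compatible. $\bar{\mathcal{B}}(X,X_r)=\{e_x+e_{y'}:x\in X,y'\in X_r\}\subseteq\mathbb{R}^{X\cup X_r}$. For $S=(A,B)$, $T_S$ is the split of $\bar{\mathcal{B}}(X)$ with split hyperplane $\sum_{i\in A}f(i)=\sum_{j\in B'}f(j)$, where $B'\subseteq X_r$ is the copy of $B$. A split of a point configuration $\mathcal{A}$ is given by an affine hyperplane in the affine hull of $\mathcal{A}$ meeting the relative interior of $\operatorname{conv}\mathcal{A}$ and not strictly separating the endpoints of any edge of $\mathcal{A}$; a set of splits is compatible if for any two of them the intersection of their hyperplanes does not meet the relative interior of $\operatorname{conv}\mathcal{A}$. *)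

theory Defs
  imports "HOL-Analysis.Analysis"
begin

text \<open>The ground set X is modelled as UNIV of a finite type 'a; the disjoint copy X_r
  is realised via the sum type: coordinate Inl x is x in X, coordinate Inr x is x' in X_r.\<close>

definition dir_partial_split :: "('a set \<times> 'a set) \<Rightarrow> bool" where
  "dir_partial_split S \<longleftrightarrow> fst S \<noteq> {} \<and> snd S \<noteq> {} \<and> fst S \<inter> snd S = {}"

definition dps_compatible :: "('a set \<times> 'a set) \<Rightarrow> ('a set \<times> 'a set) \<Rightarrow> bool" where
  "dps_compatible S T \<longleftrightarrow>
     (let A = fst S; B = snd S; C = fst T; D = snd T in
       (A \<subseteq> C \<and> B \<supseteq> D) \<or> (A \<subseteq> UNIV - C \<and> B \<supseteq> UNIV - D) \<or>
       (A \<supseteq> C \<and> B \<subseteq> D) \<or> (A \<supseteq> UNIV - C \<and> B \<subseteq> UNIV - D))"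

definition dps_set_compatible :: "('a set \<times> 'a set) set \<Rightarrow> bool" where
  "dps_set_compatible SS \<longleftrightarrow> (\<forall>S\<in>SS. \<forall>T\<in>SS. dps_compatible S T)"

definition Bbar :: "(real ^ ('a::finite + 'a)) set" where
  "Bbar = {axis (Inl x) 1 + axis (Inr y) 1 | x y. True}"

definition is_edge :: "'v::euclidean_space set \<Rightarrow> 'v \<Rightarrow> 'v \<Rightarrow> bool" where
  "is_edge P p q \<longleftrightarrow> p \<noteq> q \<and> closed_segment p q face_of convex hull P"

definition is_split :: "'v::euclidean_space set \<Rightarrow> 'v set \<Rightarrow> bool" where
  "is_split P H \<longleftrightarrow>
     (\<exists>a b. H = {x \<in> affine hull P. a \<bullet> x = b} \<and> H \<noteq> affine hull P \<and>
        H \<inter> rel_interior (convex hull P) \<noteq> {} \<and>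
        (\<forall>p q. is_edge P p q \<longrightarrow> \<not> (a \<bullet> p < b \<and> b < a \<bullet> q)))"

definition compatible_split_system :: "'v::euclidean_space set \<Rightarrow> 'v set set \<Rightarrow> bool" where
  "compatible_split_system P \<Sigma> \<longleftrightarrow>
     (\<forall>H\<in>\<Sigma>. is_split P H) \<and>
     (\<forall>H1\<in>\<Sigma>. \<forall>H2\<in>\<Sigma>. H1 \<noteq> H2 \<longrightarrow> H1 \<inter> H2 \<inter> rel_interior (convex hull P) = {})"

definition T_split :: "('a::finite set \<times> 'a set) \<Rightarrow> (real ^ ('a + 'a)) set" where
  "T_split S = {f \<in> affine hull (Bbar :: (real ^ ('a + 'a)) set).
                  (\<Sum>i\<in>fst S. f $ Inl i) = (\<Sum>j\<in>snd S. f $ Inr j)}"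

end

theory Submission
  imports Defs
begin

(*
  Every vector g of
  the affine hull has X-coordinates and X_r-coordinates each summing to 1, and such a g
  equals the "product" combination of vertices with weights g_x * g_y'.  Hence conv Bbar
  consists of the nonnegative such vectors, and its relative interior of the strictly
  positive ones.  On a positive vector the hyperplane equations of T_S are sums of
  positive coordinates, so two compatible (nested) directed partial splits whose
  hyperplanes share a relative-interior point must coincide up to complementing both sides,
  which gives the same hyperplane.  Conversely, if (A,B) and (C,D) are incompatible, every
  coordinate is made positive by some vertex, or some midpoint of two vertices, lying on
  both hyperplanes, and averaging these witnesses produces a common relative-interior
  point.  Together with the facts that each T_S is a split (its hyperplane cuts no edge,
  since endpoints of edges share a row or a column) this yields the theorem.
*)

definition vertex :: "'a::finite \<Rightarrow> 'a \<Rightarrow> real ^ ('a + 'a)" where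
  "vertex x y = axis (Inl x) 1 + axis (Inr y) 1"

lemma vertex_nth: "vertex x y $ k = (if k = Inl x \<or> k = Inr y then 1 else 0)"
  by (auto simp: vertex_def axis_def)

lemma Bbar_vertices: "Bbar = range (case_prod vertex)"
  unfolding Bbar_def vertex_def by (auto simp: image_iff)

lemma vertex_in_convex_hull: "vertex x y \<in> convex hull Bbar"
  unfolding Bbar_vertices by (rule hull_inc) auto

lemma vertex_in_affine_hull: "vertex x y \<in> affine hull Bbar"
  unfolding Bbar_vertices by (rule hull_inc) auto

definition side_sum :: "('a::finite \<Rightarrow> 'a + 'a) \<Rightarrow> 'a set \<Rightarrow> real ^ ('a + 'a) \<Rightarrow> real" where
  "side_sum side A g = (\<Sum>i\<in>A. g $ side i)"

lemma side_sum_vertex: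
  "side_sum Inl A (vertex x y) = (if x \<in> A then 1 else 0)"
  "side_sum Inr A (vertex x y) = (if y \<in> A then 1 else 0)"
  unfolding side_sum_def vertex_nth by (simp_all add: sum.If_cases)

lemma side_sum_linear:
  "side_sum side A (u *\<^sub>R f + v *\<^sub>R g) = u * side_sum side A f + v * side_sum side A g"
  by (simp add: side_sum_def sum.distrib sum_distrib_left)

lemma side_sum_Compl: "side_sum side (- A) g = side_sum side UNIV g - side_sum side A g"
  unfolding side_sum_def using sum.subset_diff[of A UNIV "\<lambda>i. g $ side i"]
  by (simp add: Compl_eq_Diff_UNIV)

text \<open>On a positive vector, side sums are strictly monotone in the index set; this is what
  forces nested splits with a common interior point to be equal.\<close>
lemma side_sum_mono:
  assumes "E \<subseteq> F" "\<forall>k. 0 < g $ k"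
  shows "side_sum side E g \<le> side_sum side F g"
  unfolding side_sum_def using assms by (intro sum_mono2) (auto simp: less_imp_le)

lemma side_sum_eq_imp_eq:
  assumes "E \<subseteq> F" "\<forall>k. 0 < g $ k" "side_sum side E g = side_sum side F g"
  shows "E = F"
proof (rule ccontr)
  assume "E \<noteq> F"
  then obtain z where "z \<in> F - E" using assms(1) by blast
  hence "side_sum side E g < side_sum side F g"
    unfolding side_sum_def using assms(1,2) by (intro sum_strict_mono2) (auto simp: less_imp_le)
  thus False using assms(3) by simp
qed

definition unit_margins :: "(real ^ ('a::finite + 'a)) set" where
  "unit_margins = {g. side_sum Inl UNIV g = 1 \<and> side_sum Inr UNIV g = 1}"

lemma affine_hull_Bbar_unit_margins: "affine hull Bbar \<subseteq> unit_margins"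
proof (rule hull_minimal)
  show "affine (unit_margins :: (real ^ ('a + 'a)) set)"
    unfolding affine_def unit_margins_def by (simp add: side_sum_linear)
qed (auto simp: Bbar_vertices unit_margins_def side_sum_vertex)

lemma convex_hull_Bbar_nonneg:
  assumes "g \<in> convex hull Bbar"
  shows "0 \<le> g $ k"
proof -
  have "convex hull Bbar \<subseteq> {g :: real ^ ('a + 'a). \<forall>k. 0 \<le> g $ k}"
    by (rule hull_minimal) (auto simp: Bbar_vertices vertex_nth convex_def)
  thus ?thesis using assms by blast
qed

lemma unit_margins_product_decomposition:
  fixes g :: "real ^ ('a::finite + 'a)"
  assumes "g \<in> unit_margins"
  shows "g = (\<Sum>x\<in>UNIV. \<Sum>y\<in>UNIV. (g $ Inl x * g $ Inr y) *\<^sub>R vertex x y)"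
proof (subst vec_eq_iff, rule allI)
  fix k :: "'a + 'a"
  have margins: "(\<Sum>x\<in>UNIV. g $ Inl x) = 1" "(\<Sum>y\<in>UNIV. g $ Inr y) = 1"
    using assms by (auto simp: unit_margins_def side_sum_def)
  have "(\<Sum>x\<in>UNIV. \<Sum>y\<in>UNIV. (g $ Inl x * g $ Inr y) *\<^sub>R vertex x y) $ k
      = (\<Sum>x\<in>UNIV. \<Sum>y\<in>UNIV. g $ Inl x * g $ Inr y * vertex x y $ k)"
    by simp
  also have "\<dots> = g $ k"
  proof (cases k)
    case (Inl a)
    have "(\<Sum>x\<in>UNIV. \<Sum>y\<in>UNIV. g $ Inl x * g $ Inr y * vertex x y $ k)
        = (\<Sum>x\<in>UNIV. if x = a then (\<Sum>y\<in>UNIV. g $ Inl x * g $ Inr y) else 0)"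
      by (rule sum.cong[OF refl]) (auto simp: Inl vertex_nth)
    also have "\<dots> = g $ Inl a * (\<Sum>y\<in>UNIV. g $ Inr y)"
      by (simp add: sum_distrib_left)
    finally show ?thesis using margins Inl by simp
  next
    case (Inr a)
    have "(\<Sum>x\<in>UNIV. \<Sum>y\<in>UNIV. g $ Inl x * g $ Inr y * vertex x y $ k)
        = (\<Sum>y\<in>UNIV. if y = a then (\<Sum>x\<in>UNIV. g $ Inl x * g $ Inr y) else 0)"
      by (subst sum.swap, rule sum.cong[OF refl]) (auto simp: Inr vertex_nth)
    also have "\<dots> = (\<Sum>x\<in>UNIV. g $ Inl x) * g $ Inr a"
      by (simp add: sum_distrib_right)
    finally show ?thesis using margins Inr by simp
  qed
  finally show "g $ k = (\<Sum>x\<in>UNIV. \<Sum>y\<in>UNIV. (g $ Inl x * g $ Inr y) *\<^sub>R vertex x y) $ k"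
    by simp
qed

text \<open>A double sum over X \<times> X as a single sum over pairs, the form used by convex_sum.\<close>
lemma sum_over_pairs:
  "(\<Sum>x\<in>UNIV. \<Sum>y\<in>UNIV. F x y) = (\<Sum>p\<in>(UNIV :: ('a::finite \<times> 'b::finite) set). F (fst p) (snd p))"
  unfolding sum.cartesian_product UNIV_Times_UNIV by (simp add: split_def)

lemma unit_margins_nonneg_in_convex_hull:
  assumes "g \<in> unit_margins" "\<forall>k. 0 \<le> g $ k"
  shows "g \<in> convex hull Bbar"
proof -
  have weights: "(\<Sum>x\<in>UNIV. \<Sum>y\<in>UNIV. g $ Inl x * g $ Inr y) = 1"
    using assms(1) by (simp add: unit_margins_def side_sum_def flip: sum_product)
  have "(\<Sum>x\<in>UNIV. \<Sum>y\<in>UNIV. (g $ Inl x * g $ Inr y) *\<^sub>R vertex x y) \<in> convex hull Bbar"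
    using weights assms(2) unfolding sum_over_pairs
    by (intro convex_sum) (auto simp: vertex_in_convex_hull)
  thus ?thesis using unit_margins_product_decomposition[OF assms(1)] by simp
qed

lemma rel_interior_Bbar_pos:
  assumes "f \<in> rel_interior (convex hull (Bbar :: (real ^ ('a::finite + 'a)) set))"
  shows "0 < f $ k"
proof -
  obtain a where k: "k = Inl a \<or> k = Inr a" by (cases k) auto
  have "convex hull (Bbar :: (real ^ ('a + 'a)) set) \<noteq> {}"
    using vertex_in_convex_hull by blast
  then obtain e where "e > 1" and e: "(1 - e) *\<^sub>R vertex a a + e *\<^sub>R f \<in> convex hull Bbar"
    using assms vertex_in_convex_hull convex_rel_interior_iff[OF convex_convex_hull] by blast
  have "0 \<le> ((1 - e) *\<^sub>R vertex a a + e *\<^sub>R f) $ k"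
    using e by (rule convex_hull_Bbar_nonneg)
  also have "\<dots> = (1 - e) + e * f $ k" using k by (auto simp: vertex_nth)
  finally have "0 < e * f $ k" using \<open>e > 1\<close> by linarith
  thus ?thesis using \<open>e > 1\<close> by (simp add: zero_less_mult_iff)
qed

lemma pos_in_rel_interior_Bbar:
  assumes "f \<in> unit_margins" "\<forall>k. 0 < f $ k"
  shows "f \<in> rel_interior (convex hull (Bbar :: (real ^ ('a::finite + 'a)) set))"
  unfolding mem_rel_interior
proof (intro exI conjI)
  let ?T = "\<Inter>k. {g :: real ^ ('a + 'a). 0 < g $ k}"
  show "open ?T" by (intro open_INT finite ballI open_halfspace_component_gt_cart)
  have positive_in_hull: "g \<in> convex hull Bbar" if "g \<in> unit_margins" "g \<in> ?T" for g
    using that by (intro unit_margins_nonneg_in_convex_hull) (auto simp: less_imp_le)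
  show "f \<in> ?T \<inter> convex hull Bbar" using assms positive_in_hull by blast
  show "?T \<inter> affine hull (convex hull Bbar) \<subseteq> convex hull Bbar"
    using affine_hull_Bbar_unit_margins positive_in_hull by auto
qed

text \<open>A convex set meets the relative interior of conv Bbar as soon as, for each coordinate,
  it contains a point of conv Bbar positive in that coordinate: average these points.\<close>
lemma rel_interior_point_from_witnesses:
  assumes "convex K"
    and "\<forall>k. \<exists>w \<in> convex hull (Bbar :: (real ^ ('a::finite + 'a)) set) \<inter> K. 0 < w $ k"
  shows "\<exists>f \<in> K. f \<in> rel_interior (convex hull (Bbar :: (real ^ ('a + 'a)) set))"
proof -
  obtain w where w: "\<And>k. w k \<in> convex hull (Bbar :: (real ^ ('a + 'a)) set) \<inter> K"
    and w_pos: "\<And>k. 0 < w k $ k"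
    using assms(2) by metis
  define c :: real where "c = real CARD('a + 'a)"
  have "c > 0" by (simp add: c_def)
  define f where "f = (\<Sum>k\<in>UNIV. (1 / c) *\<^sub>R w k)"
  have f_in: "f \<in> convex hull Bbar \<inter> K"
    unfolding f_def using assms(1) w \<open>c > 0\<close>
    by (intro convex_sum) (auto simp: c_def convex_Int)
  have "0 < f $ j" for j
  proof -
    have "0 < (\<Sum>k\<in>UNIV. (1 / c) * w k $ j)"
      using w_pos[of j] \<open>c > 0\<close> w convex_hull_Bbar_nonneg
      by (intro sum_pos2[of UNIV j]) (auto intro!: divide_nonneg_pos)
    thus ?thesis by (simp add: f_def)
  qed
  moreover have "f \<in> unit_margins"
    using f_in convex_hull_subset_affine_hull affine_hull_Bbar_unit_margins by blast
  ultimately show ?thesis using pos_in_rel_interior_Bbar f_in by blast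
qed

lemma T_split_side_sums:
  "T_split S = {f \<in> affine hull Bbar. side_sum Inl (fst S) f = side_sum Inr (snd S) f}"
  by (simp add: T_split_def side_sum_def)

lemma vertex_in_T_split: "vertex x y \<in> T_split S \<longleftrightarrow> (x \<in> fst S \<longleftrightarrow> y \<in> snd S)"
  by (simp add: T_split_side_sums vertex_in_affine_hull side_sum_vertex)

lemma convex_T_split: "convex (T_split S)"
proof -
  have "T_split S = affine hull Bbar \<inter> {f. side_sum Inl (fst S) f = side_sum Inr (snd S) f}"
    by (auto simp: T_split_side_sums)
  moreover have "convex {f :: real ^ ('a + 'a). side_sum Inl (fst S) f = side_sum Inr (snd S) f}"
    unfolding convex_def by (simp add: side_sum_linear)
  ultimately show ?thesis by (simp add: convex_Int affine_imp_convex)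
qed

lemma T_split_Compl: "T_split (- A, - B) = T_split (A, B)"
  using affine_hull_Bbar_unit_margins
  by (auto simp: T_split_side_sums side_sum_Compl unit_margins_def)

text \<open>Nested directed partial splits (A \<subseteq> C, D \<subseteq> B) whose hyperplanes share a positive
  point are equal: the chain sum_A \<le> sum_C = sum_D' \<le> sum_B' = sum_A collapses.\<close>
lemma T_split_nested_common_point:
  assumes "A \<subseteq> C" "D \<subseteq> B"
    and "f \<in> T_split (A, B)" "f \<in> T_split (C, D)" "\<forall>k. 0 < f $ k"
  shows "A = C \<and> B = D"
proof -
  have "side_sum Inl A f = side_sum Inr B f" "side_sum Inl C f = side_sum Inr D f"
    using assms(3,4) by (auto simp: T_split_side_sums)
  moreover have "side_sum Inl A f \<le> side_sum Inl C f" "side_sum Inr D f \<le> side_sum Inr B f"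
    using assms(1,2,5) by (auto intro: side_sum_mono)
  ultimately have "side_sum Inl A f = side_sum Inl C f" "side_sum Inr D f = side_sum Inr B f"
    by linarith+
  thus ?thesis using side_sum_eq_imp_eq[OF assms(1,5)] side_sum_eq_imp_eq[OF assms(2,5)] by blast
qed

lemma dps_compatible_iff:
  "dps_compatible (A, B) (C, D) \<longleftrightarrow>
     (A \<subseteq> C \<and> D \<subseteq> B) \<or> (A \<subseteq> - C \<and> - D \<subseteq> B) \<or> (C \<subseteq> A \<and> B \<subseteq> D) \<or> (- C \<subseteq> A \<and> B \<subseteq> - D)"
  by (auto simp: dps_compatible_def Let_def Compl_eq_Diff_UNIV)

lemma dps_compatible_flip: "dps_compatible (B, A) (D, C) \<longleftrightarrow> dps_compatible (A, B) (C, D)"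
  unfolding dps_compatible_iff by blast

lemma compatible_common_point_imp_eq:
  assumes compat: "dps_compatible (A, B) (C, D)"
    and f: "f \<in> T_split (A, B)" "f \<in> T_split (C, D)"
    and f_int: "f \<in> rel_interior (convex hull Bbar)"
  shows "T_split (A, B) = T_split (C, D)"
proof -
  have pos: "\<forall>k. 0 < f $ k" using f_int rel_interior_Bbar_pos by blast
  have f': "f \<in> T_split (- C, - D)" using f(2) by (simp add: T_split_Compl)
  from compat consider "A \<subseteq> C \<and> D \<subseteq> B" | "A \<subseteq> - C \<and> - D \<subseteq> B"
    | "C \<subseteq> A \<and> B \<subseteq> D" | "- C \<subseteq> A \<and> B \<subseteq> - D"
    unfolding dps_compatible_iff by blast
  thus ?thesis
  proof cases
    case 1 thus ?thesis using T_split_nested_common_point f pos by blast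
  next
    case 2 thus ?thesis using T_split_nested_common_point[OF _ _ f(1) f'] pos
      by (auto simp: T_split_Compl)
  next
    case 3 thus ?thesis using T_split_nested_common_point[OF _ _ f(2) f(1)] pos by blast
  next
    case 4 thus ?thesis using T_split_nested_common_point[OF _ _ f' f(1)] pos
      by (auto simp: T_split_Compl)
  qed
qed

text \<open>Equal hyperplanes come from equal or complementary directed partial splits, which
  are compatible.\<close>
lemma T_split_eq_imp_compatible:
  assumes eq: "T_split (A, B) = T_split (C, D)" and "A \<noteq> {}" "B \<noteq> {}"
  shows "dps_compatible (A, B) (C, D)"
proof -
  have same: "(x \<in> A \<longleftrightarrow> y \<in> B) \<longleftrightarrow> (x \<in> C \<longleftrightarrow> y \<in> D)" for x y
    using vertex_in_T_split[of x y "(A, B)"] vertex_in_T_split[of x y "(C, D)"] eq by simp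
  obtain x0 y0 where "x0 \<in> A" "y0 \<in> B" using assms(2,3) by blast
  hence "(A = C \<and> B = D) \<or> (A = - C \<and> B = - D)"
    using same[of _ y0] same[of x0] by (cases "y0 \<in> D") blast+
  thus ?thesis unfolding dps_compatible_iff by blast
qed

text \<open>The endpoints of an edge of conv Bbar share their X-coordinate or their
  X_r-coordinate: otherwise the midpoint of the edge is also the midpoint of the two
  "crossed" vertices, which would have to lie on the edge.\<close>
lemma edge_endpoints:
  assumes "is_edge Bbar p q"
  shows "\<exists>x y x' y'. p = vertex x y \<and> q = vertex x' y' \<and> (x = x' \<or> y = y')"
proof -
  have F: "closed_segment p q face_of convex hull Bbar" using assms by (simp add: is_edge_def)
  have "p extreme_point_of convex hull Bbar" "q extreme_point_of convex hull Bbar"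
    using extreme_point_of_face[OF F] by (auto simp: extreme_point_of_segment)
  hence "p \<in> Bbar" "q \<in> Bbar" using extreme_point_of_convex_hull by blast+
  then obtain x y x' y' where p: "p = vertex x y" and q: "q = vertex x' y'"
    by (auto simp: Bbar_vertices)
  have "x = x' \<or> y = y'"
  proof (rule ccontr)
    assume "\<not> (x = x' \<or> y = y')"
    hence xx: "x \<noteq> x'" and yy: "y \<noteq> y'" by auto
    have "vertex x y' $ Inl x \<noteq> vertex x' y $ Inl x" using xx by (simp add: vertex_nth)
    hence "vertex x y' \<noteq> vertex x' y" by metis
    moreover have "midpoint p q = midpoint (vertex x y') (vertex x' y)"
      by (simp add: midpoint_def p q vertex_def algebra_simps)
    ultimately have "midpoint p q \<in> open_segment (vertex x y') (vertex x' y)" by simp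
    hence "vertex x y' \<in> closed_segment p q"
      using face_ofD[OF F] vertex_in_convex_hull by (metis midpoint_in_closed_segment)
    then obtain u :: real where u: "vertex x y' = (1 - u) *\<^sub>R p + u *\<^sub>R q"
      by (auto simp: in_segment)
    have "u = 0" using arg_cong[OF u, of "\<lambda>v. v $ Inl x"] xx by (simp add: p q vertex_nth)
    moreover have "u = 1" using arg_cong[OF u, of "\<lambda>v. v $ Inr y'"] yy by (simp add: p q vertex_nth)
    ultimately show False by simp
  qed
  thus ?thesis using p q by blast
qed

definition split_normal :: "'a::finite set \<Rightarrow> 'a set \<Rightarrow> real ^ ('a + 'a)" where
  "split_normal A B = (\<chi> k. case k of Inl i \<Rightarrow> (if i \<in> A then 1 else 0) | Inr j \<Rightarrow> (if j \<in> B then -1 else 0))"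

lemma inner_split_normal: "split_normal A B \<bullet> g = side_sum Inl A g - side_sum Inr B g"
proof -
  have "split_normal A B \<bullet> g
      = (\<Sum>i\<in>UNIV. (if i \<in> A then 1 else 0) * g $ Inl i) + (\<Sum>j\<in>UNIV. (if j \<in> B then -1 else 0) * g $ Inr j)"
    using sum.Plus[of UNIV UNIV "\<lambda>k. split_normal A B $ k * g $ k"]
    by (simp add: inner_vec_def split_normal_def comp_def)
  also have "\<dots> = (\<Sum>i\<in>UNIV. if i \<in> A then g $ Inl i else 0) + (\<Sum>j\<in>UNIV. if j \<in> B then - g $ Inr j else 0)"
    by (intro arg_cong2[where f = "(+)"] sum.cong) auto
  finally show ?thesis by (simp add: side_sum_def sum.If_cases sum_negf)
qed

text \<open>Each T_S is a split of Bbar: it is a proper hyperplane section of the affine hull, a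
  vertex-witness argument puts a point of it in the relative interior, and no edge is cut
  strictly, because edge endpoints share a coordinate and the normal then takes values in
  {-1,0,1} monotonically along the edge.\<close>
lemma T_split_is_split:
  assumes "A \<noteq> {}" "B \<noteq> {}" "A \<inter> B = {}"
  shows "is_split Bbar (T_split (A, B))"
  unfolding is_split_def
proof (intro exI conjI)
  show "T_split (A, B) = {x \<in> affine hull Bbar. split_normal A B \<bullet> x = 0}"
    by (auto simp: T_split_side_sums inner_split_normal)
  obtain x0 y0 where x0: "x0 \<in> A" and y0: "y0 \<in> B" using assms(1,2) by blast
  have "vertex x0 x0 \<notin> T_split (A, B)" using x0 assms(3) by (auto simp: vertex_in_T_split)
  thus "T_split (A, B) \<noteq> affine hull Bbar" using vertex_in_affine_hull by blast
  have "\<exists>f \<in> T_split (A, B). f \<in> rel_interior (convex hull Bbar)"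
  proof (rule rel_interior_point_from_witnesses[OF convex_T_split], rule allI)
    fix k :: "'a + 'a"
    obtain x y where "k = Inl x \<or> k = Inr y" and "x \<in> A \<longleftrightarrow> y \<in> B"
      using x0 y0 assms(3) by (cases k) (metis disjoint_iff)+
    hence "vertex x y \<in> convex hull Bbar \<inter> T_split (A, B)" "0 < vertex x y $ k"
      by (auto simp: vertex_in_T_split vertex_in_convex_hull vertex_nth)
    thus "\<exists>w\<in>convex hull Bbar \<inter> T_split (A, B). 0 < w $ k" by blast
  qed
  thus "T_split (A, B) \<inter> rel_interior (convex hull Bbar) \<noteq> {}" by blast
  show "\<forall>(p :: real ^ ('a + 'a)) q. is_edge Bbar p q \<longrightarrow>
          \<not> (split_normal A B \<bullet> p < 0 \<and> 0 < split_normal A B \<bullet> q)"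
  proof (intro allI impI)
    fix p q :: "real ^ ('a + 'a)"
    assume "is_edge Bbar p q"
    then obtain x y x' y' where "p = vertex x y" "q = vertex x' y'" "x = x' \<or> y = y'"
      using edge_endpoints by blast
    thus "\<not> (split_normal A B \<bullet> p < 0 \<and> 0 < split_normal A B \<bullet> q)"
      by (auto simp: inner_split_normal side_sum_vertex split: if_splits)
  qed
qed

lemma incompatible_partner:
  assumes "\<not> dps_compatible (A, B) (C, D)"
  shows "(\<exists>y. (y \<in> B \<longleftrightarrow> x \<in> A) \<and> (y \<in> D \<longleftrightarrow> x \<in> C))
       \<or> (\<exists>x'. (x \<in> A \<longleftrightarrow> x' \<notin> A) \<and> (x \<in> C \<longleftrightarrow> x' \<notin> C))"
  using assms unfolding dps_compatible_iff by (cases "x \<in> A"; cases "x \<in> C") blast+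

lemma opposite_pair:
  assumes "A \<noteq> {}" "A \<noteq> UNIV" "C \<noteq> {}" "C \<noteq> UNIV"
  shows "\<exists>x1 x2. (x1 \<in> A \<longleftrightarrow> x2 \<notin> A) \<and> (x1 \<in> C \<longleftrightarrow> x2 \<notin> C)"
  using assms by blast

lemma midpoint_on_both_splits:
  assumes "x \<in> A \<longleftrightarrow> x' \<notin> A" "x \<in> C \<longleftrightarrow> x' \<notin> C" "y \<in> B \<longleftrightarrow> y' \<notin> B" "y \<in> D \<longleftrightarrow> y' \<notin> D"
  defines "w \<equiv> midpoint (vertex x y) (vertex x' y')"
  shows "w \<in> convex hull Bbar \<inter> (T_split (A, B) \<inter> T_split (C, D))"
    and "0 < w $ Inl x" "0 < w $ Inr y"
proof -
  have w: "w = (1/2) *\<^sub>R vertex x y + (1/2) *\<^sub>R vertex x' y'"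
    by (simp add: w_def midpoint_def scaleR_add_right)
  have "w \<in> convex hull Bbar"
    unfolding w by (rule convexD[OF convex_convex_hull vertex_in_convex_hull vertex_in_convex_hull]) auto
  moreover have "side_sum Inl A w = 1/2" "side_sum Inr B w = 1/2"
    "side_sum Inl C w = 1/2" "side_sum Inr D w = 1/2"
    using assms(1-4) by (auto simp: w side_sum_linear side_sum_vertex)
  ultimately show "w \<in> convex hull Bbar \<inter> (T_split (A, B) \<inter> T_split (C, D))"
    using convex_hull_subset_affine_hull by (auto simp: T_split_side_sums)
  show "0 < w $ Inl x" "0 < w $ Inr y" by (auto simp: w vertex_nth)
qed

text \<open>Incompatible directed partial splits have hyperplanes meeting in the relative
  interior: each coordinate is made positive by a vertex or a midpoint on both.\<close>
lemma incompatible_common_interior_point: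
  assumes "dir_partial_split (A, B)" "dir_partial_split (C, D)"
    and incompat: "\<not> dps_compatible (A, B) (C, D)"
  shows "\<exists>f \<in> T_split (A, B) \<inter> T_split (C, D). f \<in> rel_interior (convex hull Bbar)"
proof (rule rel_interior_point_from_witnesses[OF convex_Int[OF convex_T_split convex_T_split]],
       rule allI)
  fix k :: "'a + 'a"
  let ?W = "convex hull Bbar \<inter> (T_split (A, B) \<inter> T_split (C, D))"
  have proper: "A \<noteq> {}" "A \<noteq> UNIV" "B \<noteq> {}" "B \<noteq> UNIV"
    "C \<noteq> {}" "C \<noteq> UNIV" "D \<noteq> {}" "D \<noteq> UNIV"
    using assms(1,2) by (auto simp: dir_partial_split_def)
  obtain x1 x2 where xs: "x1 \<in> A \<longleftrightarrow> x2 \<notin> A" "x1 \<in> C \<longleftrightarrow> x2 \<notin> C"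
    using opposite_pair proper by metis
  obtain y1 y2 where ys: "y1 \<in> B \<longleftrightarrow> y2 \<notin> B" "y1 \<in> D \<longleftrightarrow> y2 \<notin> D"
    using opposite_pair proper by metis
  have on_both: "vertex x y \<in> ?W" if "x \<in> A \<longleftrightarrow> y \<in> B" "x \<in> C \<longleftrightarrow> y \<in> D" for x y
    using that by (simp add: vertex_in_T_split vertex_in_convex_hull)
  show "\<exists>w \<in> ?W. 0 < w $ k"
  proof (cases k)
    case (Inl x)
    from incompatible_partner[OF incompat, of x] show ?thesis
    proof (elim disjE exE conjE)
      fix y assume "y \<in> B \<longleftrightarrow> x \<in> A" "y \<in> D \<longleftrightarrow> x \<in> C"
      hence "vertex x y \<in> ?W" using on_both by blast
      moreover have "0 < vertex x y $ k" by (simp add: Inl vertex_nth)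
      ultimately show ?thesis by blast
    next
      fix x' assume "x \<in> A \<longleftrightarrow> x' \<notin> A" "x \<in> C \<longleftrightarrow> x' \<notin> C"
      from midpoint_on_both_splits[OF this ys] show ?thesis using Inl by blast
    qed
  next
    case (Inr y)
    have "\<not> dps_compatible (B, A) (D, C)" using incompat dps_compatible_flip by blast
    from incompatible_partner[OF this, of y] show ?thesis
    proof (elim disjE exE conjE)
      fix x assume "x \<in> A \<longleftrightarrow> y \<in> B" "x \<in> C \<longleftrightarrow> y \<in> D"
      hence "vertex x y \<in> ?W" using on_both by blast
      moreover have "0 < vertex x y $ k" by (simp add: Inr vertex_nth)
      ultimately show ?thesis by blast
    next
      fix y' assume "y \<in> B \<longleftrightarrow> y' \<notin> B" "y \<in> D \<longleftrightarrow> y' \<notin> D"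
      from midpoint_on_both_splits[OF xs this] show ?thesis using Inr by blast
    qed
  qed
qed

lemma compatible_iff_T_splits_compatible:
  assumes S: "dir_partial_split S" and T: "dir_partial_split T"
  shows "dps_compatible S T \<longleftrightarrow>
    (T_split S \<noteq> T_split T \<longrightarrow> T_split S \<inter> T_split T \<inter> rel_interior (convex hull Bbar) = {})"
proof -
  obtain A B C D where ST: "S = (A, B)" "T = (C, D)" by fastforce
  show ?thesis
  proof
    assume "dps_compatible S T"
    thus "T_split S \<noteq> T_split T \<longrightarrow> T_split S \<inter> T_split T \<inter> rel_interior (convex hull Bbar) = {}"
      using compatible_common_point_imp_eq[of A B C D] ST by blast
  next
    assume separated:
      "T_split S \<noteq> T_split T \<longrightarrow> T_split S \<inter> T_split T \<inter> rel_interior (convex hull Bbar) = {}"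
    show "dps_compatible S T"
    proof (rule ccontr)
      assume incompat: "\<not> dps_compatible S T"
      have "A \<noteq> {}" "B \<noteq> {}" using S ST by (auto simp: dir_partial_split_def)
      hence "T_split S \<noteq> T_split T" using T_split_eq_imp_compatible incompat ST by blast
      moreover obtain f where "f \<in> T_split S \<inter> T_split T" "f \<in> rel_interior (convex hull Bbar)"
        using incompatible_common_interior_point S T incompat ST by blast
      ultimately show False using separated by blast
    qed
  qed
qed

theorem mainTheorem5:
  fixes SS :: "('a::finite set \<times> 'a set) set"
  assumes "CARD('a) \<ge> 2"
    and "\<forall>S\<in>SS. dir_partial_split S"
  shows "dps_set_compatible SS \<longleftrightarrow>
         compatible_split_system (Bbar :: (real ^ ('a + 'a)) set) (T_split ` SS)"
proof -
  let ?relint = "rel_interior (convex hull (Bbar :: (real ^ ('a + 'a)) set))"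
  have splits: "\<forall>H \<in> T_split ` SS. is_split (Bbar :: (real ^ ('a + 'a)) set) H"
    using assms(2) by (fastforce simp: dir_partial_split_def intro!: T_split_is_split)
  have pairwise: "dps_compatible S T \<longleftrightarrow>
      (T_split S \<noteq> T_split T \<longrightarrow> T_split S \<inter> T_split T \<inter> ?relint = {})"
    if "S \<in> SS" "T \<in> SS" for S T
    using that assms(2) by (simp add: compatible_iff_T_splits_compatible)
  have "compatible_split_system Bbar (T_split ` SS) \<longleftrightarrow>
      (\<forall>S\<in>SS. \<forall>T\<in>SS. T_split S \<noteq> T_split T \<longrightarrow> T_split S \<inter> T_split T \<inter> ?relint = {})"
    using splits by (simp add: compatible_split_system_def)
  also have "\<dots> \<longleftrightarrow> dps_set_compatible SS"
    using pairwise by (simp add: dps_set_compatible_def)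
  finally show ?thesis by simp
qed

end
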